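(* Let $X$ be a projective irreducible symplectic variety with Beauville--Bogomolov--Fujiki form $q$ integral on $L:=H^2(X,\mathbb Z)$, and let $E$ be a prime exceptional divisor on $X$. Assume that (a) the linear form $-\frac{2q(E,\cdot)}{q(E)}$ on $L$ takes integer values (i.e. the class $-2E^\vee/q(E)$ is integral), and (b) either $E$ or $E/2$ is a primitive element of $L$. Then $|q(E)|\le 4\,\mathrm{Card}(A_X)$. In particular this holds for every prime exceptional divisor on a projective irreducible symplectic manifold $X$.
   Context: A (possibly singular) irreducible symplectic variety is a normal compact K\"ahler variety with canonical singularities and a symplectic reflexive $2$-form $\sigma$ such that for every quasi-\'etale $f:X'\to X$, $f^{[*]}\sigma$ generates the algebra of reflexive forms on $X'$; in the smooth case this is a simply connected compact K\"ahler manifold with $H^0(\Omega^2)=\mathbb C\sigma$, $\sigma$ symplectic. $q$ is the Beauville--Bogomolov--Fujiki form, scaled to be integral (non-degenerate) on $L=H^2(X,\mathbb Z)$; $A_X:=L^\vee/L$, with $L\hookrightarrow L^\vee$, $t\mapsto q(t,\cdot)$, is the finite discriminant group. A prime exceptional divisor is a prime divisor $E$ with $q(E)<0$. For smooth projective $X$, hypotheses (a) and (b) are known (Druel, Markman). *)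

theory Defs
  imports "HOL-Analysis.Analysis"
begin

definition bform :: "int^'n^'n \<Rightarrow> int^'n \<Rightarrow> int^'n \<Rightarrow> int" where
  "bform B x y = (\<Sum>i\<in>UNIV. \<Sum>j\<in>UNIV. x$i * B$i$j * y$j)"

definition symmetric_form :: "int^'n^'n \<Rightarrow> bool" where
  "symmetric_form B \<longleftrightarrow> (\<forall>i j. B$i$j = B$j$i)"

definition nondegenerate_form :: "int^'n^'n \<Rightarrow> bool" where
  "nondegenerate_form B \<longleftrightarrow> (\<forall>x. (\<forall>y. bform B x y = 0) \<longrightarrow> x = 0)"

text \<open>The dual lattice L^\<or> = Hom(L,Z): an integer linear form is represented by its
  coefficient vector f, acting as x \<mapsto> \<Sum>i. f$i * x$i.  The embedding
  L \<hookrightarrow> L^\<or> is t \<mapsto> q(t,-).\<close>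

definition dual_embed :: "int^'n^'n \<Rightarrow> int^'n \<Rightarrow> int^'n" where
  "dual_embed B t = (\<chi> j. \<Sum>i\<in>UNIV. t$i * B$i$j)"

definition discr_group :: "int^'n^'n \<Rightarrow> (int^'n) set set" where
  "discr_group B = (UNIV :: (int^'n) set) // {(f, g). \<exists>t. f - g = dual_embed B t}"

definition primitive :: "int^'n \<Rightarrow> bool" where
  "primitive v \<longleftrightarrow> v \<noteq> 0 \<and> (\<forall>(k::int) w. v = k *s w \<longrightarrow> \<bar>k\<bar> = 1)"

end

theory Submission
  imports Defs "Jordan_Normal_Form.Determinant"
begin

text \<open>Let \<open>c = q(E) < 0\<close>.  Hypothesis (a) says that \<open>f = 2 q(E,-) / c\<close> is an integral
  linear form, i.e. an element of \<open>L\<^sup>\<or>\<close>.  If \<open>k f\<close> lies in \<open>L\<close>, say \<open>k f = q(t,-)\<close>, then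
  nondegeneracy gives \<open>c t = 2 k E\<close>, and writing \<open>E = e w\<close> with \<open>w\<close> primitive and \<open>e \<in> {1,2}\<close>
  (hypothesis (b)) forces \<open>c\<close> to divide \<open>2 k e\<close>, hence \<open>4 k\<close>.  So the class of \<open>f\<close> in the
  finite group \<open>A = L\<^sup>\<or>/L\<close> has order at least \<open>|c|/4\<close>, and \<open>|c| \<le> 4 |A|\<close>.\<close>

no_notation vec_index (infixl "$" 100)

lemma dual_embed_zero [simp]: "dual_embed B 0 = 0"
  by (simp add: dual_embed_def Finite_Cartesian_Product.vec_eq_iff)

lemma dual_embed_add: "dual_embed B (s + t) = dual_embed B s + dual_embed B t"
  by (simp add: dual_embed_def Finite_Cartesian_Product.vec_eq_iff sum.distrib distrib_right)

lemma dual_embed_diff: "dual_embed B (s - t) = dual_embed B s - dual_embed B t"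
  by (simp add: dual_embed_def Finite_Cartesian_Product.vec_eq_iff sum_subtractf left_diff_distrib)

lemma dual_embed_smult: "dual_embed B (c *s t) = c *s dual_embed B t"
  by (simp add: dual_embed_def Finite_Cartesian_Product.vec_eq_iff sum_distrib_left mult.assoc)

lemma bform_eq_dual_embed: "bform B x y = (\<Sum>j\<in>UNIV. dual_embed B x $ j * y $ j)"
  unfolding bform_def dual_embed_def by (subst sum.swap) (simp add: sum_distrib_right)

lemma bform_axis: "bform B x (axis j 1) = dual_embed B x $ j"
  by (simp add: bform_eq_dual_embed axis_def if_distrib[of "\<lambda>z. a * z" for a] cong: if_cong)

lemma dual_embed_eq_0_iff:
  assumes "nondegenerate_form B"
  shows "dual_embed B t = 0 \<longleftrightarrow> t = 0"
  using assms unfolding nondegenerate_form_def by (auto simp: bform_eq_dual_embed)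

definition dual_coset_rel :: "int^'n^'n \<Rightarrow> ((int^'n) \<times> (int^'n)) set" where
  "dual_coset_rel B = {(f, g). \<exists>t. f - g = dual_embed B t}"

lemma discr_group_eq_quotient: "discr_group B = UNIV // dual_coset_rel B"
  by (simp add: discr_group_def dual_coset_rel_def)

lemma equiv_dual_coset_rel: "equiv UNIV (dual_coset_rel B)"
  unfolding equiv_def refl_on_def sym_def trans_def dual_coset_rel_def
proof (intro conjI allI impI; clarsimp)
  show "\<exists>t. dual_embed B t = 0" by (metis dual_embed_zero)
  fix x y t assume "x - y = dual_embed B t"
  then show "\<exists>t. y - x = dual_embed B t"
    by (metis dual_embed_diff dual_embed_zero diff_zero minus_diff_eq)
next
  fix x y z t s assume "x - y = dual_embed B t" "y - z = dual_embed B s"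
  then show "\<exists>t. x - z = dual_embed B t"
    by (metis dual_embed_add diff_add_cancel add_diff_eq)
qed

text \<open>The adjugate: \<open>M (adj M) = det M \<cdot> 1\<close>, and \<open>det M \<noteq> 0\<close> for an injective \<open>M\<close>.\<close>

lemma injective_mat_image_contains_multiples:
  fixes M :: "int mat"
  assumes M: "M \<in> carrier_mat n n"
    and inj: "\<And>v. v \<in> carrier_vec n \<Longrightarrow> M *\<^sub>v v = 0\<^sub>v n \<Longrightarrow> v = 0\<^sub>v n"
  shows "\<exists>D. D \<noteq> 0 \<and> (\<forall>w\<in>carrier_vec n. \<exists>u\<in>carrier_vec n. M *\<^sub>v u = D \<cdot>\<^sub>v w)"
proof (intro exI conjI ballI)
  show "Determinant.det M \<noteq> 0"
    using det_0_iff_vec_prod_zero[OF M] inj by blast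
  fix w :: "int vec" assume w: "w \<in> carrier_vec n"
  have adj: "adj_mat M \<in> carrier_mat n n" "M * adj_mat M = Determinant.det M \<cdot>\<^sub>m 1\<^sub>m n"
    using adj_mat[OF M] by auto
  have "M *\<^sub>v (adj_mat M *\<^sub>v w) = (Determinant.det M \<cdot>\<^sub>m 1\<^sub>m n) *\<^sub>v w"
    using assoc_mult_mat_vec[OF M adj(1) w] adj(2) by simp
  also have "\<dots> = Determinant.det M \<cdot>\<^sub>v w"
    using w by (intro eq_vecI)
      (auto simp: scalar_prod_def if_distrib[of "\<lambda>z. a * z" for a]
        if_distrib[of "\<lambda>z. z * b" for b] cong: if_cong)
  finally show "\<exists>u\<in>carrier_vec n. M *\<^sub>v u = Determinant.det M \<cdot>\<^sub>v w"
    using adj(1) w by (intro bexI[of _ "adj_mat M *\<^sub>v w"]) auto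
qed

lemma dual_embed_as_mat:
  fixes B :: "int^'n^'n"
  obtains M :: "int mat" and to_vec :: "int^'n \<Rightarrow> int vec"
  where "M \<in> carrier_mat CARD('n) CARD('n)"
    and "bij_betw to_vec UNIV (carrier_vec CARD('n))"
    and "\<And>x. M *\<^sub>v to_vec x = to_vec (dual_embed B x)"
    and "\<And>c x. to_vec (c *s x) = c \<cdot>\<^sub>v to_vec x"
    and "to_vec 0 = 0\<^sub>v CARD('n)"
proof -
  let ?n = "CARD('n)"
  obtain g where g: "bij_betw g {0..<?n} (UNIV::'n set)"
    using ex_bij_betw_nat_finite[of "UNIV::'n set"] by auto
  define to_vec :: "int^'n \<Rightarrow> int vec" where "to_vec x = vec ?n (\<lambda>a. x $ g a)" for x
  define M :: "int mat" where "M = mat ?n ?n (\<lambda>(a, b). B $ g b $ g a)"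
  have carrier: "M \<in> carrier_mat ?n ?n"
    by (simp add: M_def)
  have g_surj: "\<exists>a<?n. k = g a" for k
    using g unfolding bij_betw_def by (metis UNIV_I imageE atLeastLessThan_iff)
  have "inj to_vec"
  proof (rule injI)
    fix x y assume "to_vec x = to_vec y"
    then have "x $ g a = y $ g a" if "a < ?n" for a
      using that by (metis to_vec_def index_vec)
    then show "x = y"
      using g_surj by (metis Finite_Cartesian_Product.vec_eq_iff)
  qed
  moreover have "v \<in> range to_vec" if "v \<in> carrier_vec ?n" for v
  proof -
    have "v = to_vec (\<chi> k. vec_index v (inv_into {0..<?n} g k))"
      using that g by (intro eq_vecI) (auto simp: to_vec_def bij_betw_inv_into_left)
    then show ?thesis by blast
  qed
  moreover have "range to_vec \<subseteq> carrier_vec ?n"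
    by (auto simp: to_vec_def)
  ultimately have bij: "bij_betw to_vec UNIV (carrier_vec ?n)"
    unfolding bij_betw_def by blast
  have M_to_vec: "M *\<^sub>v to_vec x = to_vec (dual_embed B x)" for x
  proof (rule eq_vecI)
    fix a assume "a < dim_vec (to_vec (dual_embed B x))"
    then have a: "a < ?n" by (simp add: to_vec_def)
    have "vec_index (M *\<^sub>v to_vec x) a = (\<Sum>b\<in>{0..<?n}. x $ g b * B $ g b $ g a)"
      using a by (simp add: M_def to_vec_def scalar_prod_def mult.commute)
    also have "\<dots> = (\<Sum>k\<in>UNIV. x $ k * B $ k $ g a)"
      using sum.reindex_bij_betw[OF g, of "\<lambda>k. x $ k * B $ k $ g a"] by simp
    finally show "vec_index (M *\<^sub>v to_vec x) a = vec_index (to_vec (dual_embed B x)) a"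
      using a by (simp add: to_vec_def dual_embed_def)
  qed (simp add: M_def to_vec_def)
  have "to_vec (c *s x) = c \<cdot>\<^sub>v to_vec x" for c x
    by (intro eq_vecI) (auto simp: to_vec_def)
  moreover have "to_vec 0 = 0\<^sub>v ?n"
    by (intro eq_vecI) (auto simp: to_vec_def)
  ultimately show thesis
    using that[OF carrier bij M_to_vec] by blast
qed

lemma dual_embed_image_contains_multiples:
  fixes B :: "int^'n^'n"
  assumes nondeg: "nondegenerate_form B"
  shows "\<exists>D>0. \<forall>f. \<exists>t. dual_embed B t = D *s f"
proof -
  obtain M and to_vec :: "int^'n \<Rightarrow> int vec"
    where M: "M \<in> carrier_mat CARD('n) CARD('n)"
      and bij: "bij_betw to_vec UNIV (carrier_vec CARD('n))"
      and M_to_vec: "\<And>x. M *\<^sub>v to_vec x = to_vec (dual_embed B x)"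
      and smult: "\<And>c x. to_vec (c *s x) = c \<cdot>\<^sub>v to_vec x"
      and zero: "to_vec 0 = 0\<^sub>v CARD('n)"
    using dual_embed_as_mat[of B] by blast
  have inj: "to_vec x = to_vec y \<Longrightarrow> x = y" for x y
    using bij by (auto simp: bij_betw_def dest: injD)
  have "v = 0\<^sub>v CARD('n)" if v: "v \<in> carrier_vec CARD('n)" and "M *\<^sub>v v = 0\<^sub>v CARD('n)" for v
  proof -
    obtain x where x: "v = to_vec x"
      using bij v by (auto simp: bij_betw_def)
    then have "dual_embed B x = 0"
      using \<open>M *\<^sub>v v = 0\<^sub>v CARD('n)\<close> by (intro inj) (simp add: M_to_vec zero)
    then show ?thesis
      using x zero dual_embed_eq_0_iff[OF nondeg] by simp
  qed
  then obtain D where D: "D \<noteq> 0" "\<forall>w\<in>carrier_vec CARD('n). \<exists>u\<in>carrier_vec CARD('n). M *\<^sub>v u = D \<cdot>\<^sub>v w"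
    using injective_mat_image_contains_multiples[OF M] by blast
  have "\<exists>t. dual_embed B t = \<bar>D\<bar> *s f" for f
  proof -
    obtain u where u: "u \<in> carrier_vec CARD('n)" "M *\<^sub>v u = D \<cdot>\<^sub>v to_vec (sgn D *s f)"
      using D(2) bij_betwE[OF bij] by blast
    obtain t where "u = to_vec t"
      using bij u(1) by (auto simp: bij_betw_def)
    then have "to_vec (dual_embed B t) = D \<cdot>\<^sub>v to_vec (sgn D *s f)"
      using u(2) by (simp add: M_to_vec)
    also have "\<dots> = to_vec (\<bar>D\<bar> *s f)"
      by (simp only: smult[symmetric]) (simp add: vector_smult_assoc abs_sgn mult.commute)
    finally show ?thesis
      using inj by blast
  qed
  then show ?thesis
    using D(1) by (intro exI[of _ "\<bar>D\<bar>"]) auto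
qed

lemma finite_discr_group:
  fixes B :: "int^'n^'n"
  assumes "nondegenerate_form B"
  shows "finite (discr_group B)"
proof -
  obtain D :: int where D: "D > 0" "\<And>f. \<exists>t. dual_embed B t = D *s f"
    using dual_embed_image_contains_multiples[OF assms] by blast
  define reps where "reps = {r::int^'n. \<forall>i. r $ i \<in> {0..<D}}"
  have "reps \<subseteq> (\<lambda>h. \<chi> i. h i) ` (UNIV \<rightarrow>\<^sub>E {0..<D})"
  proof
    fix r assume "r \<in> reps"
    then have "(\<lambda>i. r $ i) \<in> UNIV \<rightarrow>\<^sub>E {0..<D}" by (auto simp: reps_def)
    then show "r \<in> (\<lambda>h. \<chi> i. h i) ` (UNIV \<rightarrow>\<^sub>E {0..<D})" by force
  qed
  then have "finite reps"
    by (rule finite_subset) (intro finite_imageI finite_PiE; simp)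
  moreover have "discr_group B \<subseteq> (\<lambda>r. dual_coset_rel B `` {r}) ` reps"
  proof
    fix X assume "X \<in> discr_group B"
    then obtain f where X: "X = dual_coset_rel B `` {f}"
      by (auto simp: discr_group_eq_quotient elim: quotientE)
    define r where "r = (\<chi> i. f $ i mod D)"
    have "f - r = D *s (\<chi> i. f $ i div D)"
      by (simp add: r_def Finite_Cartesian_Product.vec_eq_iff minus_mod_eq_mult_div)
    moreover obtain t where "dual_embed B t = D *s (\<chi> i. f $ i div D)"
      using D(2) by blast
    ultimately have "(f, r) \<in> dual_coset_rel B"
      by (auto simp: dual_coset_rel_def intro!: exI[of _ t])
    then have "X = dual_coset_rel B `` {r}"
      unfolding X by (rule equiv_class_eq[OF equiv_dual_coset_rel])
    moreover have "r \<in> reps"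
      using D(1) by (simp add: r_def reps_def)
    ultimately show "X \<in> (\<lambda>r. dual_coset_rel B `` {r}) ` reps" by blast
  qed
  ultimately show ?thesis
    by (meson finite_imageI finite_subset)
qed

lemma card_discr_group_ge_order:
  fixes B :: "int^'n^'n" and f :: "int^'n"
  assumes nondeg: "nondegenerate_form B"
    and not_in_lattice: "\<And>k t. 0 < k \<Longrightarrow> k < int N \<Longrightarrow> dual_embed B t \<noteq> k *s f"
  shows "N \<le> card (discr_group B)"
proof -
  define cls where "cls k = dual_coset_rel B `` {int k *s f}" for k
  have inj: "inj_on cls {0..<N}"
  proof (rule linorder_inj_onI')
    fix k1 k2 assume "k1 \<in> {0..<N}" "k2 \<in> {0..<N}" "k1 < k2"
    show "cls k1 \<noteq> cls k2"
    proof
      assume "cls k1 = cls k2"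
      then have "(int k2 *s f, int k1 *s f) \<in> dual_coset_rel B"
        unfolding cls_def by (intro eq_equiv_class[OF sym equiv_dual_coset_rel]) simp_all
      then obtain t where "int k2 *s f - int k1 *s f = dual_embed B t"
        by (auto simp: dual_coset_rel_def)
      then have "dual_embed B t = (int k2 - int k1) *s f"
        by (simp add: Finite_Cartesian_Product.vec_eq_iff algebra_simps)
      then show False
        using not_in_lattice[of "int k2 - int k1" t] \<open>k1 < k2\<close> \<open>k2 \<in> {0..<N}\<close> by auto
    qed
  qed
  have "cls ` {0..<N} \<subseteq> discr_group B"
    unfolding cls_def discr_group_eq_quotient by (blast intro: quotientI)
  then have "card (cls ` {0..<N}) \<le> card (discr_group B)"
    by (rule card_mono[OF finite_discr_group[OF nondeg]])
  then show ?thesis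
    using card_image[OF inj] by simp
qed

lemma primitive_smult_dvd:
  fixes c m :: int and t w :: "int^'n"
  assumes w: "primitive w" and c: "c \<noteq> 0" and eq: "c *s t = m *s w"
  shows "c dvd m"
proof -
  define g where "g = gcd c m"
  define c' where "c' = c div g"
  define m' where "m' = m div g"
  have g: "g \<noteq> 0" "c = g * c'" "m = g * m'"
    using c by (simp_all add: g_def c'_def m'_def)
  have "coprime c' m'"
    unfolding c'_def m'_def g_def using c by (intro div_gcd_coprime) auto
  moreover have "c' * t $ i = m' * w $ i" for i
    using eq g by (metis vector_smult_component mult.assoc mult_left_cancel)
  ultimately have "c' dvd w $ i" for i
    by (metis dvd_triv_left coprime_dvd_mult_right_iff)
  then have "w = c' *s (\<chi> i. w $ i div c')"
    by (simp add: Finite_Cartesian_Product.vec_eq_iff)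
  then have "\<bar>c'\<bar> = 1"
    using w unfolding primitive_def by blast
  then show ?thesis
    using g by (auto simp: abs_if split: if_splits)
qed

lemma lattice_multiple_of_scaled_dual:
  fixes B :: "int^'n^'n"
  assumes nondeg: "nondegenerate_form B" and c: "c \<noteq> 0"
    and f: "c *s f = 2 *s dual_embed B E"
    and E: "E = e *s w" and w: "primitive w"
    and t: "dual_embed B t = k *s f"
  shows "c dvd 2 * k * e"
proof -
  have "dual_embed B (c *s t) = k *s (c *s f)"
    by (simp add: dual_embed_smult t vector_smult_assoc mult.commute)
  also have "\<dots> = dual_embed B ((2 * k) *s E)"
    by (simp add: f dual_embed_smult vector_smult_assoc mult.commute)
  finally have "c *s t = (2 * k) *s E"
    using dual_embed_eq_0_iff[OF nondeg] by (metis dual_embed_diff eq_iff_diff_eq_0)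
  then have "c *s t = (2 * k * e) *s w"
    by (simp add: E vector_smult_assoc)
  then show ?thesis
    using primitive_smult_dvd[OF w c] by blast
qed

lemma abs_le_4_card_discr_group:
  fixes B :: "int^'n^'n"
  assumes nondeg: "nondegenerate_form B" and c: "c < 0"
    and f: "c *s f = 2 *s dual_embed B E"
    and E: "E = e *s w" and w: "primitive w" and e: "e dvd 2"
  shows "\<bar>c\<bar> \<le> 4 * int (card (discr_group B))"
proof -
  define N where "N = nat ((3 - c) div 4)"
  have N: "int N = (3 - c) div 4"
    using c by (simp add: N_def)
  have "dual_embed B t \<noteq> k *s f" if "0 < k" "k < int N" for k t
  proof
    assume "dual_embed B t = k *s f"
    then have "c dvd 2 * k * e"
      using lattice_multiple_of_scaled_dual[OF nondeg _ f E w] c by simp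
    also have "\<dots> dvd 2 * k * 2"
      using e by (rule mult_dvd_mono[OF dvd_refl])
    finally have "- c \<le> 4 * k"
      using dvd_imp_le_int[of "4 * k" c] \<open>0 < k\<close> c by simp
    then show False
      using \<open>k < int N\<close> N by linarith
  qed
  then have "N \<le> card (discr_group B)"
    using card_discr_group_ge_order[OF nondeg] by blast
  moreover have "- c \<le> 4 * int N"
    using N by linarith
  ultimately show ?thesis
    using c by simp
qed

theorem proposition4:
  fixes B :: "int^'n^'n" and E :: "int^'n"
  assumes sym: "symmetric_form B"
    and nondeg: "nondegenerate_form B"
    and neg: "bform B E E < 0"
    and a: "\<forall>x. bform B E E dvd 2 * bform B E x"
    and b: "primitive E \<or> (\<exists>w. E = 2 *s w \<and> primitive w)"
  shows "\<bar>bform B E E\<bar> \<le> 4 * int (card (discr_group B))"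
proof -
  define c where "c = bform B E E"
  have "c dvd 2 * dual_embed B E $ j" for j
    using a[rule_format, of "axis j 1"] by (simp add: c_def bform_axis)
  then obtain f where f: "c *s f = 2 *s dual_embed B E"
    by (intro that[of "\<chi> j. 2 * dual_embed B E $ j div c"])
      (simp add: Finite_Cartesian_Product.vec_eq_iff)
  obtain e w where "E = e *s w" "primitive w" "e dvd 2"
  proof (cases "primitive E")
    case True
    then show ?thesis using that[of 1 E] by simp
  next
    case False
    then show ?thesis using b that[of 2] by auto
  qed
  then show ?thesis
    using abs_le_4_card_discr_group[OF nondeg _ f] neg by (simp add: c_def)
qed

end
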